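(* Let $N\ge 1$, let $f:Z[1,N]\times\mathbb{R}\to\mathbb{R}$ be continuous in its second variable for every $k\in Z[1,N]$, and let $p:Z[1,N+2]\to\mathbb{R}$, $q:Z[1,N+1]\to\mathbb{R}$. Assume that (1) $\min_{k\in Z[1,N]}\lim_{s\to+\infty}\frac{f(k,s)}{s}>\alpha_1$ (the limits being assumed to exist in $(-\infty,+\infty]$); (2) there exists $S>0$ such that $f(k,-s)\le -f(k,s)$ for all $s\ge S$ and $k\in Z[1,N]$. Then $J$ is coercive on $E$ and the boundary value problem $$\Delta^2\big(p(k)\Delta^2 y(k-2)\big)+\Delta\big(q(k)\Delta y(k-1)\big)+f(k,y(k))=0\ \ (k\in Z[1,N]),\qquad y(-1)=y(0)=y(N+1)=y(N+2)=0$$ has at least one solution.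
   Context: $Z[a,b]=[a,b]\cap\mathbb{Z}$; $\Delta x(k)=x(k+1)-x(k)$, $\Delta^2=\Delta\circ\Delta$; $\Delta^2(p(k)\Delta^2y(k-2))$ means $\Delta^2$ applied to $k\mapsto p(k)\Delta^2 y(k-2)$, similarly for $\Delta(q(k)\Delta y(k-1))$. A solution is a function $y:Z[-1,N+2]\to\mathbb{R}$ satisfying the equation and boundary conditions. $E=\{y:Z[-1,N+2]\to\mathbb{R}\mid y(-1)=y(0)=y(N+1)=y(N+2)=0\}$ with norm $\|y\|=(\sum_{k=1}^N y(k)^2)^{1/2}$; $F(k,s)=\int_0^s f(k,t)dt$; $J(y)=\sum_{k=1}^{N+2}\frac{p(k)}{2}(\Delta^2 y(k-2))^2-\sum_{k=1}^{N+1}\frac{q(k)}{2}(\Delta y(k-1))^2+\sum_{k=1}^N F(k,y(k))$; $J$ is coercive if $J(y)\to+\infty$ as $\|y\|\to\infty$. $p_{\min}=\min_{Z[1,N+2]}p$, $q_{\max}=\max_{Z[1,N+1]}q$. With $\tilde y=(y(1),\dots,y(N))^T$, $V$ is the $(N+1)\times N$ matrix with $V\tilde y=(\Delta y(0),\dots,\Delta y(N))^T$ and $W$ the $(N+2)\times N$ matrix with $W\tilde y=(\Delta^2y(-1),\dots,\Delta^2y(N))^T$ for $y\in E$; $\lambda_1$, $\lambda_2$ are the smallest eigenvalues of $V^TV$ and $W^TW$. $\eta'(p)=\lambda_2$ if $p_{\min}\ge0$, $\eta'(p)=16$ if $p_{\min}<0$; $\eta(q)=\lambda_1$ if $q_{\max}<0$,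 $\eta(q)=4$ if $q_{\max}\ge0$; $\alpha_1=\eta(q)q_{\max}-\eta'(p)p_{\min}$. *)

theory Defs
  imports "HOL-Analysis.Analysis"
begin

definition fdiff :: "(int \<Rightarrow> real) \<Rightarrow> int \<Rightarrow> real" where
  "fdiff x k = x (k + 1) - x k"

definition fdiff2 :: "(int \<Rightarrow> real) \<Rightarrow> int \<Rightarrow> real" where
  "fdiff2 x = fdiff (fdiff x)"

text \<open>The space E: functions on Z[-1,N+2] (values outside are irrelevant) with the boundary conditions.\<close>
definition Espace :: "nat \<Rightarrow> (int \<Rightarrow> real) set" where
  "Espace N = {y. y (-1) = 0 \<and> y 0 = 0 \<and> y (int N + 1) = 0 \<and> y (int N + 2) = 0}"

definition Enorm :: "nat \<Rightarrow> (int \<Rightarrow> real) \<Rightarrow> real" where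
  "Enorm N y = sqrt (\<Sum>k=1..int N. (y k)^2)"

text \<open>Primitive F(k,s) = int_0^s f(k,t) dt (oriented interval integral).\<close>
definition Fprim :: "(int \<Rightarrow> real \<Rightarrow> real) \<Rightarrow> int \<Rightarrow> real \<Rightarrow> real" where
  "Fprim f k s = (LBINT t=0..s. f k t)"

definition Jfun :: "nat \<Rightarrow> (int \<Rightarrow> real) \<Rightarrow> (int \<Rightarrow> real) \<Rightarrow> (int \<Rightarrow> real \<Rightarrow> real)
    \<Rightarrow> (int \<Rightarrow> real) \<Rightarrow> real" where
  "Jfun N p q f y =
     (\<Sum>k=1..int N + 2. p k / 2 * (fdiff2 y (k - 2))^2)
   - (\<Sum>k=1..int N + 1. q k / 2 * (fdiff y (k - 1))^2)
   + (\<Sum>k=1..int N. Fprim f k (y k))"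

definition coercive_on_E :: "nat \<Rightarrow> ((int \<Rightarrow> real) \<Rightarrow> real) \<Rightarrow> bool" where
  "coercive_on_E N J \<longleftrightarrow>
     (\<forall>M. \<exists>R. \<forall>y \<in> Espace N. Enorm N y > R \<longrightarrow> J y > M)"

text \<open>Matrices as functions nat \<Rightarrow> nat \<Rightarrow> real (0-based indices).
  Column i corresponds to y(i+1); the matrix of a linear map on E is obtained
  by applying it to the unit functions.\<close>
definition unitfun :: "nat \<Rightarrow> int \<Rightarrow> real" where
  "unitfun i = (\<lambda>k. if k = int i + 1 then 1 else 0)"

text \<open>V: (N+1) x N, row j gives Delta y(j), j = 0..N.\<close>
definition Vmat :: "nat \<Rightarrow> nat \<Rightarrow> real" where
  "Vmat j i = fdiff (unitfun i) (int j)"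

text \<open>W: (N+2) x N, row j gives Delta^2 y(j-1), j = 0..N+1.\<close>
definition Wmat :: "nat \<Rightarrow> nat \<Rightarrow> real" where
  "Wmat j i = fdiff2 (unitfun i) (int j - 1)"

definition gram :: "nat \<Rightarrow> (nat \<Rightarrow> nat \<Rightarrow> real) \<Rightarrow> nat \<Rightarrow> nat \<Rightarrow> real" where
  "gram m A i j = (\<Sum>r<m. A r i * A r j)"

definition is_eigenvalue :: "nat \<Rightarrow> (nat \<Rightarrow> nat \<Rightarrow> real) \<Rightarrow> real \<Rightarrow> bool" where
  "is_eigenvalue n A \<mu> \<longleftrightarrow>
     (\<exists>v. (\<exists>i<n. v i \<noteq> 0) \<and> (\<forall>i<n. (\<Sum>j<n. A i j * v j) = \<mu> * v i))"

definition smallest_eigenvalue :: "nat \<Rightarrow> (nat \<Rightarrow> nat \<Rightarrow> real) \<Rightarrow> real" where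
  "smallest_eigenvalue n A = Min {\<mu>. is_eigenvalue n A \<mu>}"

definition lambda1 :: "nat \<Rightarrow> real" where
  "lambda1 N = smallest_eigenvalue N (gram (N + 1) Vmat)"

definition lambda2 :: "nat \<Rightarrow> real" where
  "lambda2 N = smallest_eigenvalue N (gram (N + 2) Wmat)"

definition pmin :: "nat \<Rightarrow> (int \<Rightarrow> real) \<Rightarrow> real" where
  "pmin N p = Min (p ` {1..int N + 2})"

definition qmax :: "nat \<Rightarrow> (int \<Rightarrow> real) \<Rightarrow> real" where
  "qmax N q = Max (q ` {1..int N + 1})"

definition eta' :: "nat \<Rightarrow> (int \<Rightarrow> real) \<Rightarrow> real" where
  "eta' N p = (if pmin N p \<ge> 0 then lambda2 N else 16)"

definition eta :: "nat \<Rightarrow> (int \<Rightarrow> real) \<Rightarrow> real" where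
  "eta N q = (if qmax N q < 0 then lambda1 N else 4)"

definition alpha1 :: "nat \<Rightarrow> (int \<Rightarrow> real) \<Rightarrow> (int \<Rightarrow> real) \<Rightarrow> real" where
  "alpha1 N p q = eta N q * qmax N q - eta' N p * pmin N p"

definition is_solution :: "nat \<Rightarrow> (int \<Rightarrow> real) \<Rightarrow> (int \<Rightarrow> real) \<Rightarrow> (int \<Rightarrow> real \<Rightarrow> real)
    \<Rightarrow> (int \<Rightarrow> real) \<Rightarrow> bool" where
  "is_solution N p q f y \<longleftrightarrow>
     y \<in> Espace N \<and>
     (\<forall>k \<in> {1..int N}.
        fdiff2 (\<lambda>j. p j * fdiff2 y (j - 2)) k + fdiff (\<lambda>j. q j * fdiff y (j - 1)) k
        + f k (y k) = 0)"

end

theory Submission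
  imports Defs "Jordan_Normal_Form.Spectral_Radius"
begin

text \<open>\<open>J\<close> is a continuous function of the finitely many values \<open>y(1), \<dots>, y(N)\<close>. Its quadratic
  part is at least \<open>-\<alpha>\<^sub>1 \<parallel>y\<parallel>\<^sup>2 / 2\<close>: the Rayleigh bounds \<open>\<lambda>\<^sub>2 \<parallel>y\<parallel>\<^sup>2 \<le> \<parallel>W y\<parallel>\<^sup>2\<close> and
  \<open>\<lambda>\<^sub>1 \<parallel>y\<parallel>\<^sup>2 \<le> \<parallel>V y\<parallel>\<^sup>2\<close> are used when the sign of \<open>p_min\<close> resp. \<open>q_max\<close> makes them point the right
  way, and the crude bounds \<open>\<parallel>W y\<parallel>\<^sup>2 \<le> 16 \<parallel>y\<parallel>\<^sup>2\<close>, \<open>\<parallel>V y\<parallel>\<^sup>2 \<le> 4 \<parallel>y\<parallel>\<^sup>2\<close> otherwise. Hypotheses (1)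
  and (2) give \<open>F(k,s) \<ge> c s\<^sup>2 / 2 - D\<close> for some \<open>c > \<alpha>\<^sub>1\<close>, on the left because \<open>f(k,-s) \<le> -c s\<close>.
  Hence \<open>J(y) \<ge> (c - \<alpha>\<^sub>1) \<parallel>y\<parallel>\<^sup>2 / 2 - N D\<close> is coercive, \<open>J\<close> attains its minimum on \<open>E\<close>, and,
  after summation by parts, stationarity of \<open>J\<close> at the minimiser in the direction of each unit
  function is exactly the difference equation at that point.\<close>

lemma has_real_derivative_zero_at_min:
  fixes \<phi> :: "real \<Rightarrow> real"
  assumes "(\<phi> has_real_derivative l) (at x)" and "\<And>t. \<phi> x \<le> \<phi> t"
  shows "l = 0"
  by (rule DERIV_local_min[OF assms(1), of 1]) (simp_all add: assms(2))

lemma compact_PiE_UNIV: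
  fixes S :: "'i \<Rightarrow> real set"
  assumes "\<And>i. compact (S i)"
  shows "compact (Pi\<^sub>E UNIV S)"
proof -
  have "compactin (product_topology (\<lambda>i. euclidean) UNIV) (Pi\<^sub>E UNIV S)"
    using assms by (auto simp: compactin_PiE)
  then show ?thesis by (simp add: euclidean_product_topology)
qed

section \<open>Quadratic growth of the primitive\<close>

lemma has_real_derivative_Fprim:
  assumes "continuous_on UNIV (f k)"
  shows "(Fprim f k has_real_derivative f k x) (at x)"
proof -
  let ?a = "-\<bar>x\<bar> - 1" and ?b = "\<bar>x\<bar> + 1"
  have "((\<lambda>u. LBINT t=ereal 0..u. f k t) has_vector_derivative f k x) (at x within {?a..?b})"
    by (rule interval_integral_FTC2) (simp_all add: continuous_on_subset[OF assms])
  moreover have "at x within {?a..?b} = at x"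
    by (rule at_within_interior) (simp add: abs_if)
  ultimately show ?thesis
    unfolding Fprim_def has_real_derivative_iff_has_vector_derivative zero_ereal_def by simp
qed

lemma continuous_on_Fprim:
  assumes "continuous_on UNIV (f k)"
  shows "continuous_on UNIV (Fprim f k)"
  using has_real_derivative_Fprim[of f k, OF assms] DERIV_isCont continuous_at_imp_continuous_on by blast

lemma antiderivative_ge_quadratic:
  fixes G g :: "real \<Rightarrow> real"
  assumes der: "\<And>x. (G has_real_derivative g x) (at x)"
    and "0 \<le> S"
    and right: "\<And>s. S \<le> s \<Longrightarrow> c * s \<le> g s"
    and left: "\<And>s. S \<le> s \<Longrightarrow> g (-s) \<le> - (c * s)"
  shows "\<exists>D. \<forall>s. c * s^2 / 2 - D \<le> G s"
proof -
  define h where "h s = G s - c * s^2 / 2" for s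
  have dh: "(h has_real_derivative g x - c * x) (at x)" for x
    unfolding h_def by (auto intro!: derivative_eq_intros der)
  have dh_mirror: "((\<lambda>s. h (-s)) has_real_derivative - g (-x) - c * x) (at x)" for x
    using DERIV_mirror[where f=h and x=x and y="g (-x) + c * x"] dh[of "-x"] by simp
  have h_right: "h S \<le> h s" if "S \<le> s" for s
    by (rule DERIV_nonneg_imp_nondecreasing[OF that]) (use dh right in force)
  have h_left: "h (-S) \<le> h (-s)" if "S \<le> s" for s
    using DERIV_nonneg_imp_nondecreasing[OF that, of "\<lambda>s. h (-s)"] dh_mirror left by force
  have "continuous_on {-S..S} h"
    using dh DERIV_isCont continuous_at_imp_continuous_on by blast
  moreover have "{-S..S} \<noteq> {}" using \<open>0 \<le> S\<close> by simp
  ultimately obtain z where z: "\<And>s. s \<in> {-S..S} \<Longrightarrow> h z \<le> h s"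
    using continuous_attains_inf[OF compact_Icc] by blast
  have h_min: "h z \<le> h s" for s
  proof (cases "s \<in> {-S..S}")
    case True
    then show ?thesis by (rule z)
  next
    case False
    then consider "S \<le> s" | "S \<le> -s" by force
    then show ?thesis
      using z[of S] z[of "-S"] h_right[of s] h_left[of "-s"] \<open>0 \<le> S\<close> by cases force+
  qed
  have "c * s^2 / 2 - (- h z) \<le> G s" for s
    using h_min[of s] h_def[of s] by linarith
  then show ?thesis by blast
qed

lemma eventually_linear_le_of_tendsto_ereal:
  fixes g :: "real \<Rightarrow> real"
  assumes "((\<lambda>s. ereal (g s / s)) \<longlongrightarrow> L) at_top" and "ereal c < L"
  shows "\<forall>\<^sub>F s in at_top. c * s \<le> g s"
proof -
  have "\<forall>\<^sub>F s in at_top. ereal c < ereal (g s / s)"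
    by (rule order_tendstoD(1)[OF assms])
  with eventually_gt_at_top[of 0] show ?thesis
    by eventually_elim (simp add: pos_less_divide_eq less_imp_le)
qed

lemma eventually_uniform_slope_gt:
  fixes f :: "'k \<Rightarrow> real \<Rightarrow> real"
  assumes "finite K"
    and "\<forall>k\<in>K. \<exists>L. ((\<lambda>s. ereal (f k s / s)) \<longlongrightarrow> L) at_top \<and> ereal a < L"
  shows "\<exists>c > a. \<forall>\<^sub>F s in at_top. \<forall>k\<in>K. c * s \<le> f k s"
proof -
  obtain L where L: "\<And>k. k \<in> K \<Longrightarrow> ((\<lambda>s. ereal (f k s / s)) \<longlongrightarrow> L k) at_top"
    and a_L: "\<And>k. k \<in> K \<Longrightarrow> ereal a < L k"
    using assms(2) by metis
  have "ereal a < Min (insert (ereal (a + 1)) (L ` K))"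
    using assms(1) a_L by simp
  then obtain c where c: "ereal a < ereal c" "ereal c < Min (insert (ereal (a + 1)) (L ` K))"
    using ereal_dense2 by blast
  have "\<forall>\<^sub>F s in at_top. \<forall>k\<in>K. c * s \<le> f k s"
    using c(2) assms(1)
    by (intro eventually_ball_finite ballI eventually_linear_le_of_tendsto_ereal[OF L]) auto
  with c(1) show ?thesis by auto
qed

lemma Fprim_ge_quadratic:
  assumes "finite K"
    and cont: "\<forall>k\<in>K. continuous_on UNIV (f k)"
    and growth: "\<forall>\<^sub>F s in at_top. \<forall>k\<in>K. c * s \<le> f k s \<and> f k (-s) \<le> - f k s"
  shows "\<exists>D. \<forall>k\<in>K. \<forall>t. c * t^2 / 2 - D \<le> Fprim f k t"
proof -
  obtain S where S: "\<And>s k. S \<le> s \<Longrightarrow> k \<in> K \<Longrightarrow> c * s \<le> f k s \<and> f k (-s) \<le> - f k s"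
    using growth by (auto simp: eventually_at_top_linorder)
  have "\<forall>k\<in>K. \<exists>D. \<forall>t. c * t^2 / 2 - D \<le> Fprim f k t"
  proof
    fix k assume k: "k \<in> K"
    show "\<exists>D. \<forall>t. c * t^2 / 2 - D \<le> Fprim f k t"
    proof (rule antiderivative_ge_quadratic[of _ "f k" "max S 0"])
      show "(Fprim f k has_real_derivative f k x) (at x)" for x
        using has_real_derivative_Fprim cont k by blast
      show "c * s \<le> f k s" and "f k (-s) \<le> - (c * s)" if "max S 0 \<le> s" for s
        using S[of s k] that k by auto
    qed simp
  qed
  then obtain D where D: "\<And>k t. k \<in> K \<Longrightarrow> c * t^2 / 2 - D k \<le> Fprim f k t"
    by metis
  have "D k \<le> (\<Sum>j\<in>K. \<bar>D j\<bar>)" if "k \<in> K" for k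
    using member_le_sum[of k K "\<lambda>j. \<bar>D j\<bar>"] that assms(1) by force
  with D show ?thesis by (metis diff_left_mono order.trans)
qed

section \<open>Rayleigh quotient of a Gram matrix\<close>

definition sum_squares :: "nat \<Rightarrow> (nat \<Rightarrow> real) \<Rightarrow> real" where
  "sum_squares n v = (\<Sum>i<n. (v i)^2)"

definition gram_form :: "nat \<Rightarrow> nat \<Rightarrow> (nat \<Rightarrow> nat \<Rightarrow> real) \<Rightarrow> (nat \<Rightarrow> real) \<Rightarrow> real" where
  "gram_form m n A v = (\<Sum>r<m. (\<Sum>i<n. A r i * v i)^2)"

lemma sum_squares_nonneg: "0 \<le> sum_squares n v"
  by (simp add: sum_squares_def sum_nonneg)

lemma gram_form_nonneg: "0 \<le> gram_form m n A v"
  by (simp add: gram_form_def sum_nonneg)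

lemma continuous_on_sum_squares: "continuous_on UNIV (sum_squares n)"
  unfolding sum_squares_def by (intro continuous_intros continuous_on_product_coordinates)

lemma continuous_on_gram_form: "continuous_on UNIV (gram_form m n A)"
  unfolding gram_form_def by (intro continuous_intros continuous_on_product_coordinates)

lemma gram_form_eq_quadratic_form:
  "(\<Sum>i<n. v i * (\<Sum>j<n. gram m A i j * v j)) = gram_form m n A v"
proof -
  have "(\<Sum>i<n. v i * (\<Sum>j<n. gram m A i j * v j))
      = (\<Sum>i<n. \<Sum>j<n. \<Sum>r<m. (A r i * v i) * (A r j * v j))"
    by (simp add: gram_def sum_distrib_left sum_distrib_right mult_ac)
  also have "\<dots> = (\<Sum>r<m. \<Sum>i<n. \<Sum>j<n. (A r i * v i) * (A r j * v j))"
    by (simp add: sum.swap[of _ "{..<m}"])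
  also have "\<dots> = gram_form m n A v"
    by (simp add: gram_form_def power2_eq_square sum_product)
  finally show ?thesis .
qed

lemma finite_eigenvalues: "finite {\<mu>. is_eigenvalue n A \<mu>}"
proof -
  define M where "M = Matrix.mat n n (\<lambda>(i, j). A i j)"
  have M: "M \<in> carrier_mat n n" by (simp add: M_def)
  have "{\<mu>. is_eigenvalue n A \<mu>} \<subseteq> spectrum M"
  proof
    fix \<mu> assume "\<mu> \<in> {\<mu>. is_eigenvalue n A \<mu>}"
    then obtain v where v: "\<exists>i<n. v i \<noteq> 0" "\<forall>i<n. (\<Sum>j<n. A i j * v j) = \<mu> * v i"
      unfolding is_eigenvalue_def by auto
    have "eigenvector M (Matrix.vec n v) \<mu>"
      unfolding eigenvector_def
    proof (intro conjI)
      show "Matrix.vec n v \<in> carrier_vec (dim_row M)" using M by simp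
      show "Matrix.vec n v \<noteq> 0\<^sub>v (dim_row M)" using v(1) M
        by (metis carrier_matD(1) index_vec index_zero_vec(1))
      show "M *\<^sub>v Matrix.vec n v = \<mu> \<cdot>\<^sub>v Matrix.vec n v"
        by (rule eq_vecI) (use v(2) in \<open>auto simp: M_def scalar_prod_def atLeast0LessThan\<close>)
    qed
    then show "\<mu> \<in> spectrum M" unfolding spectrum_def eigenvalue_def by auto
  qed
  then show ?thesis using card_finite_spectrum[OF M] finite_subset by blast
qed

text \<open>The Rayleigh quotient of \<open>A\<^sup>T A\<close> attains its infimum: minimise \<open>gram_form\<close> on the
  compact unit sphere of the first \<open>n\<close> coordinates, then rescale.\<close>
lemma gram_form_attains_min_on_sphere:
  assumes "n \<ge> 1"
  obtains u where "sum_squares n u = 1"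
    and "\<And>w. gram_form m n A u * sum_squares n w \<le> gram_form m n A w"
proof -
  define Sph where "Sph = Pi\<^sub>E UNIV (\<lambda>i. if i < n then {-1..1} else {0}) \<inter> {w. sum_squares n w = 1}"
  have "compact Sph"
    unfolding Sph_def
    by (intro compact_Int_closed compact_PiE_UNIV closed_Collect_eq continuous_on_sum_squares
        continuous_on_const) auto
  moreover have "(\<lambda>i. if i = 0 then 1 else 0) \<in> Sph"
  proof -
    have "sum_squares n (\<lambda>i. if i = 0 then 1 else 0) = (\<Sum>i<n. if i = 0 then 1 else 0)"
      unfolding sum_squares_def by (rule sum.cong) auto
    then show ?thesis using assms by (auto simp: Sph_def)
  qed
  ultimately obtain u where u: "u \<in> Sph" and u_min: "\<And>w. w \<in> Sph \<Longrightarrow> gram_form m n A u \<le> gram_form m n A w"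
    using continuous_attains_inf[of Sph "gram_form m n A"]
      continuous_on_subset[OF continuous_on_gram_form] by blast
  have "gram_form m n A u * sum_squares n w \<le> gram_form m n A w" for w
  proof (cases "sum_squares n w = 0")
    case True then show ?thesis by (simp add: gram_form_nonneg)
  next
    case False
    define \<rho> where "\<rho> = sqrt (sum_squares n w)"
    have \<rho>: "0 < \<rho>" "\<rho>^2 = sum_squares n w"
      using False sum_squares_nonneg[of n w] by (auto simp: \<rho>_def)
    define z where "z i = (if i < n then w i / \<rho> else 0)" for i
    have ss_z: "sum_squares n z = 1"
      using \<rho> False by (simp add: sum_squares_def z_def power_divide sum_divide_distrib[symmetric])
    have "z i \<in> {-1..1}" if "i < n" for i
    proof -
      have "(w i)^2 \<le> \<rho>^2"
        unfolding \<rho>(2) sum_squares_def by (rule member_le_sum) (use that in auto)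
      then have "\<bar>w i\<bar> \<le> \<rho>" using \<rho>(1) by (simp add: power2_le_iff_abs_le)
      then show ?thesis using \<rho>(1) that by (simp add: z_def abs_le_iff le_divide_eq divide_le_eq)
    qed
    then have "z \<in> Sph" using ss_z by (auto simp: Sph_def PiE_iff z_def)
    moreover have "gram_form m n A z = gram_form m n A w / \<rho>^2"
      by (simp add: gram_form_def z_def sum_divide_distrib[symmetric] power_divide)
    ultimately have "gram_form m n A u \<le> gram_form m n A w / \<rho>^2"
      using u_min by metis
    moreover have "0 < \<rho>^2" using \<rho>(1) by simp
    ultimately show ?thesis unfolding \<rho>(2) by (simp add: pos_le_divide_eq)
  qed
  with u that show ?thesis by (auto simp: Sph_def)
qed

text \<open>A minimiser of the Rayleigh quotient is stationary in every coordinate direction,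
  which is the eigenvector equation.\<close>
lemma rayleigh_minimizer_is_eigenvector:
  assumes min: "\<And>w. \<mu> * sum_squares n w \<le> gram_form m n A w"
    and u: "sum_squares n u = 1" "gram_form m n A u = \<mu>"
    and k: "k < n"
  shows "(\<Sum>j<n. gram m A k j * u j) = \<mu> * u k"
proof -
  define a where "a r = (\<Sum>i<n. A r i * u i)" for r
  define d where "d i = (if i = k then 1 else 0 :: real)" for i
  define \<phi> where "\<phi> t = gram_form m n A (\<lambda>i. u i + t * d i) - \<mu> * sum_squares n (\<lambda>i. u i + t * d i)" for t
  have "(\<Sum>i<n. A r i * (t * d i)) = (\<Sum>i<n. if i = k then t * A r k else 0)" for r t
    by (rule sum.cong) (auto simp: d_def)
  then have "(\<Sum>i<n. A r i * (u i + t * d i)) = a r + t * A r k" for r t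
    using k by (simp add: a_def distrib_left sum.distrib)
  then have \<phi>_eq: "\<phi> = (\<lambda>t. (\<Sum>r<m. (a r + t * A r k)^2) - \<mu> * (\<Sum>i<n. (u i + t * d i)^2))"
    by (simp add: fun_eq_iff \<phi>_def gram_form_def sum_squares_def)
  have "(\<Sum>i<n. 2 * u i * d i) = (\<Sum>i<n. if i = k then 2 * u k else 0)"
    by (rule sum.cong) (auto simp: d_def)
  then have "(\<Sum>i<n. 2 * u i * d i) = 2 * u k"
    using k by simp
  then have "(\<phi> has_real_derivative (\<Sum>r<m. 2 * a r * A r k) - \<mu> * (2 * u k)) (at 0)"
    unfolding \<phi>_eq by (auto intro!: derivative_eq_intros simp: mult_ac)
  moreover have "\<phi> 0 \<le> \<phi> t" for t
    using min[of "\<lambda>i. u i + t * d i"] u by (simp add: \<phi>_def)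
  ultimately have "(\<Sum>r<m. 2 * a r * A r k) - \<mu> * (2 * u k) = 0"
    by (rule has_real_derivative_zero_at_min)
  then have "2 * (\<Sum>r<m. A r k * a r) = 2 * (\<mu> * u k)"
    by (simp add: sum_distrib_left mult_ac)
  then have "(\<Sum>r<m. A r k * a r) = \<mu> * u k"
    by simp
  then show ?thesis
    by (simp add: a_def gram_def sum_distrib_left sum_distrib_right mult_ac sum.swap[of _ "{..<n}"])
qed

lemma rayleigh_bound_le_eigenvalue:
  assumes min: "\<And>w. \<mu> * sum_squares n w \<le> gram_form m n A w"
    and "is_eigenvalue n (gram m A) \<nu>"
  shows "\<mu> \<le> \<nu>"
proof -
  obtain w where w: "\<exists>i<n. w i \<noteq> 0" "\<forall>i<n. (\<Sum>j<n. gram m A i j * w j) = \<nu> * w i"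
    using assms(2) unfolding is_eigenvalue_def by blast
  then obtain i where "i < n" "w i \<noteq> 0" by auto
  then have "0 < sum_squares n w"
    unfolding sum_squares_def by (intro sum_pos2[of _ i]) auto
  moreover have "gram_form m n A w = \<nu> * sum_squares n w"
    using w(2)
    by (simp add: gram_form_eq_quadratic_form[symmetric] sum_squares_def sum_distrib_left
        power2_eq_square mult_ac)
  ultimately show ?thesis using min[of w] by simp
qed

lemma smallest_eigenvalue_gram_le:
  assumes "n \<ge> 1"
  shows "smallest_eigenvalue n (gram m A) * sum_squares n v \<le> gram_form m n A v"
proof -
  obtain u where u: "sum_squares n u = 1"
    and min: "\<And>w. gram_form m n A u * sum_squares n w \<le> gram_form m n A w"
    using gram_form_attains_min_on_sphere[OF assms] by blast
  have "is_eigenvalue n (gram m A) (gram_form m n A u)"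
    unfolding is_eigenvalue_def
  proof (intro exI[of _ u] conjI)
    show "\<exists>i<n. u i \<noteq> 0"
    proof (rule ccontr)
      assume "\<not> (\<exists>i<n. u i \<noteq> 0)"
      then have "sum_squares n u = 0" by (simp add: sum_squares_def)
      with u show False by simp
    qed
    show "\<forall>i<n. (\<Sum>j<n. gram m A i j * u j) = gram_form m n A u * u i"
      using rayleigh_minimizer_is_eigenvector[OF min u] by blast
  qed
  then have "smallest_eigenvalue n (gram m A) = gram_form m n A u"
    unfolding smallest_eigenvalue_def
    using finite_eigenvalues rayleigh_bound_le_eigenvalue[OF min] by (intro Min_eqI) auto
  with min show ?thesis by simp
qed

section \<open>Difference energies on \<open>E\<close>\<close>

lemma Enorm_nonneg: "0 \<le> Enorm N y"
  by (simp add: Enorm_def sum_nonneg)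

lemma Enorm_power2: "(Enorm N y)^2 = (\<Sum>k=1..int N. (y k)^2)"
  by (simp add: Enorm_def sum_nonneg)

lemma Espace_eq_0_outside:
  assumes "y \<in> Espace N" "-1 \<le> k" "k \<le> int N + 2" "k \<notin> {1..int N}"
  shows "y k = 0"
proof -
  have "k = -1 \<or> k = 0 \<or> k = int N + 1 \<or> k = int N + 2" using assms(2-4) by auto
  then show ?thesis using assms(1) by (auto simp: Espace_def)
qed

lemma sum_atLeastAtMost_int_eq_sum_lessThan:
  "(\<Sum>k=1..int M. g k) = (\<Sum>r<M. g (int r + 1))"
proof -
  have "{1..int M} = (\<lambda>r. int r + 1) ` {..<M}"
  proof
    show "{1..int M} \<subseteq> (\<lambda>r. int r + 1) ` {..<M}"
    proof
      fix x assume "x \<in> {1..int M}"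
      then have "x = int (nat (x - 1)) + 1" "nat (x - 1) < M" by auto
      then show "x \<in> (\<lambda>r. int r + 1) ` {..<M}" by blast
    qed
  qed auto
  moreover have "inj_on (\<lambda>r. int r + 1) {..<M}" by (auto simp: inj_on_def)
  ultimately show ?thesis by (simp add: sum.reindex)
qed

lemma Espace_sum_shifted_squares:
  assumes y: "y \<in> Espace N" and "0 \<le> j" "j \<le> e" "e \<le> 2"
  shows "(\<Sum>k=1..int N + e. (y (k - j))^2) = (Enorm N y)^2"
proof -
  have "(\<Sum>k=1..int N + e. (y (k - j))^2) = (\<Sum>k\<in>(\<lambda>t. t - j) ` {1..int N + e}. (y k)^2)"
    by (subst sum.reindex) (auto simp: inj_on_def)
  also have "\<dots> = (\<Sum>k=1..int N. (y k)^2)"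
    using assms Espace_eq_0_outside[OF y] by (intro sum.mono_neutral_right) auto
  finally show ?thesis by (simp add: Enorm_power2)
qed

lemma Espace_eq_sum_unitfun:
  assumes y: "y \<in> Espace N" and "-1 \<le> k" "k \<le> int N + 2"
  shows "(\<Sum>i<N. y (int i + 1) * unitfun i k) = y k"
proof (cases "k \<in> {1..int N}")
  case True
  then have "(\<Sum>i<N. y (int i + 1) * unitfun i k) = (\<Sum>i<N. if i = nat (k - 1) then y k else 0)"
    by (intro sum.cong) (auto simp: unitfun_def)
  with True show ?thesis by (simp add: nat_less_iff)
next
  case False
  then have "(\<Sum>i<N. y (int i + 1) * unitfun i k) = 0"
    by (intro sum.neutral) (auto simp: unitfun_def)
  then show ?thesis using Espace_eq_0_outside[OF assms False] by simp
qed

lemma fdiff2_eq: "fdiff2 x j = x (j + 2) - 2 * x (j + 1) + x j"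
  by (simp add: fdiff2_def fdiff_def algebra_simps)

lemma Wmat_mult_Espace:
  assumes y: "y \<in> Espace N" and "r < N + 2"
  shows "(\<Sum>i<N. Wmat r i * y (int i + 1)) = fdiff2 y (int r - 1)"
proof -
  define j where "j = int r - 1"
  have "-1 \<le> j" "j + 2 \<le> int N + 2" using assms(2) by (auto simp: j_def)
  then have "fdiff2 y j = (\<Sum>i<N. y (int i + 1) * unitfun i (j + 2))
      - 2 * (\<Sum>i<N. y (int i + 1) * unitfun i (j + 1)) + (\<Sum>i<N. y (int i + 1) * unitfun i j)"
    by (simp add: fdiff2_eq Espace_eq_sum_unitfun[OF y])
  then show ?thesis unfolding j_def
    by (simp add: Wmat_def fdiff2_eq sum_distrib_left sum.distrib sum_subtractf algebra_simps)
qed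

lemma Vmat_mult_Espace:
  assumes y: "y \<in> Espace N" and "r < N + 1"
  shows "(\<Sum>i<N. Vmat r i * y (int i + 1)) = fdiff y (int r)"
proof -
  have "fdiff y (int r) = (\<Sum>i<N. y (int i + 1) * unitfun i (int r + 1))
      - (\<Sum>i<N. y (int i + 1) * unitfun i (int r))"
    using assms by (simp add: fdiff_def Espace_eq_sum_unitfun)
  then show ?thesis by (simp add: Vmat_def fdiff_def sum_subtractf algebra_simps)
qed

lemma sum_fdiff2_squares_eq_gram_form:
  assumes "y \<in> Espace N"
  shows "(\<Sum>k=1..int N + 2. (fdiff2 y (k - 2))^2) = gram_form (N + 2) N Wmat (\<lambda>i. y (int i + 1))"
proof -
  have "(\<Sum>k=1..int N + 2. (fdiff2 y (k - 2))^2) = (\<Sum>k=1..int (N + 2). (fdiff2 y (k - 2))^2)"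
    by (simp add: add.commute)
  also have "\<dots> = (\<Sum>r<N + 2. (fdiff2 y (int r - 1))^2)"
    by (subst sum_atLeastAtMost_int_eq_sum_lessThan) (simp add: algebra_simps)
  finally show ?thesis by (simp add: gram_form_def Wmat_mult_Espace[OF assms])
qed

lemma sum_fdiff_squares_eq_gram_form:
  assumes "y \<in> Espace N"
  shows "(\<Sum>k=1..int N + 1. (fdiff y (k - 1))^2) = gram_form (N + 1) N Vmat (\<lambda>i. y (int i + 1))"
proof -
  have "(\<Sum>k=1..int N + 1. (fdiff y (k - 1))^2) = (\<Sum>k=1..int (N + 1). (fdiff y (k - 1))^2)"
    by (simp add: add.commute)
  also have "\<dots> = (\<Sum>r<N + 1. (fdiff y (int r))^2)"
    by (subst sum_atLeastAtMost_int_eq_sum_lessThan) simp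
  finally show ?thesis by (simp add: gram_form_def Vmat_mult_Espace[OF assms])
qed

lemma Enorm_power2_eq_sum_squares: "(Enorm N y)^2 = sum_squares N (\<lambda>i. y (int i + 1))"
  by (simp add: Enorm_power2 sum_squares_def sum_atLeastAtMost_int_eq_sum_lessThan)

lemma lambda2_le_sum_fdiff2_squares:
  assumes "y \<in> Espace N" "N \<ge> 1"
  shows "lambda2 N * (Enorm N y)^2 \<le> (\<Sum>k=1..int N + 2. (fdiff2 y (k - 2))^2)"
  unfolding sum_fdiff2_squares_eq_gram_form[OF assms(1)] Enorm_power2_eq_sum_squares lambda2_def
  by (rule smallest_eigenvalue_gram_le[OF assms(2)])

lemma lambda1_le_sum_fdiff_squares:
  assumes "y \<in> Espace N" "N \<ge> 1"
  shows "lambda1 N * (Enorm N y)^2 \<le> (\<Sum>k=1..int N + 1. (fdiff y (k - 1))^2)"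
  unfolding sum_fdiff_squares_eq_gram_form[OF assms(1)] Enorm_power2_eq_sum_squares lambda1_def
  by (rule smallest_eigenvalue_gram_le[OF assms(2)])

lemma sum_fdiff2_squares_le:
  assumes y: "y \<in> Espace N"
  shows "(\<Sum>k=1..int N + 2. (fdiff2 y (k - 2))^2) \<le> 16 * (Enorm N y)^2"
proof -
  have "(fdiff2 y (k - 2))^2 \<le> 4 * ((y (k - 0))^2 + 2 * (y (k - 1))^2 + (y (k - 2))^2)" for k
  proof -
    have "4 * ((y k)^2 + 2 * (y (k - 1))^2 + (y (k - 2))^2) - (fdiff2 y (k - 2))^2
        = 2 * (y k + y (k - 1))^2 + 2 * (y (k - 1) + y (k - 2))^2 + (y k - y (k - 2))^2"
      by (simp add: fdiff2_eq power2_eq_square algebra_simps)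
    then have "0 \<le> 4 * ((y k)^2 + 2 * (y (k - 1))^2 + (y (k - 2))^2) - (fdiff2 y (k - 2))^2"
      by simp
    then show ?thesis by simp
  qed
  then have "(\<Sum>k=1..int N + 2. (fdiff2 y (k - 2))^2)
      \<le> (\<Sum>k=1..int N + 2. 4 * ((y (k - 0))^2 + 2 * (y (k - 1))^2 + (y (k - 2))^2))"
    by (rule sum_mono)
  also have "\<dots> = 4 * ((\<Sum>k=1..int N + 2. (y (k - 0))^2) + 2 * (\<Sum>k=1..int N + 2. (y (k - 1))^2)
      + (\<Sum>k=1..int N + 2. (y (k - 2))^2))"
    by (simp add: sum.distrib sum_distrib_left)
  also have "\<dots> = 16 * (Enorm N y)^2"
    using Espace_sum_shifted_squares[OF y, of 0 2] Espace_sum_shifted_squares[OF y, of 1 2]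
      Espace_sum_shifted_squares[OF y, of 2 2] by simp
  finally show ?thesis .
qed

lemma sum_fdiff_squares_le:
  assumes y: "y \<in> Espace N"
  shows "(\<Sum>k=1..int N + 1. (fdiff y (k - 1))^2) \<le> 4 * (Enorm N y)^2"
proof -
  have "(fdiff y (k - 1))^2 \<le> 2 * ((y (k - 0))^2 + (y (k - 1))^2)" for k
  proof -
    have "2 * ((y k)^2 + (y (k - 1))^2) - (fdiff y (k - 1))^2 = (y k + y (k - 1))^2"
      by (simp add: fdiff_def power2_eq_square algebra_simps)
    then have "0 \<le> 2 * ((y k)^2 + (y (k - 1))^2) - (fdiff y (k - 1))^2"
      by simp
    then show ?thesis by simp
  qed
  then have "(\<Sum>k=1..int N + 1. (fdiff y (k - 1))^2)
      \<le> (\<Sum>k=1..int N + 1. 2 * ((y (k - 0))^2 + (y (k - 1))^2))"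
    by (rule sum_mono)
  also have "\<dots> = 2 * ((\<Sum>k=1..int N + 1. (y (k - 0))^2) + (\<Sum>k=1..int N + 1. (y (k - 1))^2))"
    by (simp add: sum.distrib sum_distrib_left)
  also have "\<dots> = 4 * (Enorm N y)^2"
    using Espace_sum_shifted_squares[OF y, of 0 1] Espace_sum_shifted_squares[OF y, of 1 1] by simp
  finally show ?thesis .
qed

section \<open>Coercivity and the Euler--Lagrange equation\<close>

lemma pmin_le: "k \<in> {1..int N + 2} \<Longrightarrow> pmin N p \<le> p k"
  unfolding pmin_def by (rule Min_le) auto

lemma qmax_ge: "k \<in> {1..int N + 1} \<Longrightarrow> q k \<le> qmax N q"
  unfolding qmax_def by (rule Max_ge) auto

lemma eta'_pmin_le_weighted_sum_fdiff2_squares: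
  assumes "y \<in> Espace N" "N \<ge> 1"
  shows "eta' N p * pmin N p * (Enorm N y)^2 \<le> (\<Sum>k=1..int N + 2. p k * (fdiff2 y (k - 2))^2)"
proof -
  have "eta' N p * pmin N p * (Enorm N y)^2 \<le> pmin N p * (\<Sum>k=1..int N + 2. (fdiff2 y (k - 2))^2)"
  proof (cases "pmin N p \<ge> 0")
    case True
    then show ?thesis
      using mult_left_mono[OF lambda2_le_sum_fdiff2_squares[OF assms] True]
      by (simp add: eta'_def mult_ac)
  next
    case False
    then show ?thesis
      using mult_left_mono_neg[OF sum_fdiff2_squares_le[OF assms(1)], of "pmin N p"]
      by (simp add: eta'_def)
  qed
  also have "\<dots> \<le> (\<Sum>k=1..int N + 2. p k * (fdiff2 y (k - 2))^2)"
    unfolding sum_distrib_left by (intro sum_mono) (simp add: pmin_le mult_right_mono)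
  finally show ?thesis .
qed

lemma weighted_sum_fdiff_squares_le_eta_qmax:
  assumes "y \<in> Espace N" "N \<ge> 1"
  shows "(\<Sum>k=1..int N + 1. q k * (fdiff y (k - 1))^2) \<le> eta N q * qmax N q * (Enorm N y)^2"
proof -
  have "(\<Sum>k=1..int N + 1. q k * (fdiff y (k - 1))^2)
      \<le> qmax N q * (\<Sum>k=1..int N + 1. (fdiff y (k - 1))^2)"
    unfolding sum_distrib_left by (intro sum_mono) (simp add: qmax_ge mult_right_mono)
  also have "\<dots> \<le> eta N q * qmax N q * (Enorm N y)^2"
  proof (cases "qmax N q < 0")
    case True
    then show ?thesis
      using mult_left_mono_neg[OF lambda1_le_sum_fdiff_squares[OF assms], of "qmax N q"]
      by (simp add: eta_def)
  next
    case False
    then show ?thesis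
      using mult_left_mono[OF sum_fdiff_squares_le[OF assms(1)], of "qmax N q"]
      by (simp add: eta_def)
  qed
  finally show ?thesis .
qed

lemma Jfun_ge_quadratic:
  assumes y: "y \<in> Espace N" and "N \<ge> 1"
    and F: "\<And>k t. k \<in> {1..int N} \<Longrightarrow> c * t^2 / 2 - D \<le> Fprim f k t"
  shows "(c - alpha1 N p q) / 2 * (Enorm N y)^2 - real N * D \<le> Jfun N p q f y"
proof -
  have "(\<Sum>k=1..int N. c * (y k)^2 / 2 - D) \<le> (\<Sum>k=1..int N. Fprim f k (y k))"
    by (rule sum_mono) (rule F)
  moreover have "(\<Sum>k=1..int N. c * (y k)^2 / 2 - D) = c / 2 * (Enorm N y)^2 - real N * D"
    by (simp add: Enorm_power2 sum_subtractf sum_distrib_left sum_divide_distrib)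
  moreover have "(\<Sum>k=1..int N + 2. p k / 2 * (fdiff2 y (k - 2))^2)
      = (\<Sum>k=1..int N + 2. p k * (fdiff2 y (k - 2))^2) / 2"
    and "(\<Sum>k=1..int N + 1. q k / 2 * (fdiff y (k - 1))^2)
      = (\<Sum>k=1..int N + 1. q k * (fdiff y (k - 1))^2) / 2"
    by (simp_all add: sum_divide_distrib)
  ultimately show ?thesis
    using eta'_pmin_le_weighted_sum_fdiff2_squares[OF assms(1,2), of p] weighted_sum_fdiff_squares_le_eta_qmax[OF assms(1,2), of q]
    unfolding Jfun_def alpha1_def by (simp add: field_simps)
qed

lemma coercive_on_E_if_ge_quadratic:
  assumes "0 < a" and "\<And>y. y \<in> Espace N \<Longrightarrow> a * (Enorm N y)^2 - b \<le> J y"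
  shows "coercive_on_E N J"
  unfolding coercive_on_E_def
proof
  fix M
  define R where "R = sqrt (\<bar>M + b\<bar> / a)"
  have "M < J y" if "y \<in> Espace N" "R < Enorm N y" for y
  proof -
    have "R^2 < (Enorm N y)^2"
      using that(2) \<open>0 < a\<close> by (intro power_strict_mono) (auto simp: R_def)
    then have "\<bar>M + b\<bar> < a * (Enorm N y)^2"
      using \<open>0 < a\<close> by (simp add: R_def pos_divide_less_eq mult.commute)
    then show ?thesis using assms(2)[OF that(1)] by linarith
  qed
  then show "\<exists>R. \<forall>y\<in>Espace N. R < Enorm N y \<longrightarrow> M < J y" by blast
qed

lemma Jfun_cong:
  assumes "\<And>k. k \<in> {-1..int N + 2} \<Longrightarrow> y k = z k"
  shows "Jfun N p q f y = Jfun N p q f z"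
proof -
  have "(\<Sum>k=1..int N + 2. p k / 2 * (fdiff2 y (k - 2))^2) = (\<Sum>k=1..int N + 2. p k / 2 * (fdiff2 z (k - 2))^2)"
    by (rule sum.cong) (auto simp: fdiff2_eq assms)
  moreover have "(\<Sum>k=1..int N + 1. q k / 2 * (fdiff y (k - 1))^2) = (\<Sum>k=1..int N + 1. q k / 2 * (fdiff z (k - 1))^2)"
    by (rule sum.cong) (auto simp: fdiff_def assms)
  moreover have "(\<Sum>k=1..int N. Fprim f k (y k)) = (\<Sum>k=1..int N. Fprim f k (z k))"
    by (rule sum.cong) (auto simp: assms)
  ultimately show ?thesis unfolding Jfun_def by simp
qed

lemma continuous_on_Jfun:
  assumes "\<forall>k\<in>{1..int N}. continuous_on UNIV (f k)"
  shows "continuous_on UNIV (Jfun N p q f)"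
proof -
  have "continuous_on UNIV (\<lambda>y::int \<Rightarrow> real. Fprim f k (y k))" if "k \<in> {1..int N}" for k
    using continuous_on_Fprim[of f k] assms that
    by (intro continuous_on_compose2[OF _ continuous_on_product_coordinates]) auto
  then show ?thesis
    unfolding Jfun_def[abs_def] fdiff2_def fdiff_def
    by (intro continuous_intros continuous_on_product_coordinates) auto
qed

text \<open>Only the finitely many values \<open>y(1), \<dots>, y(N)\<close> matter, so by coercivity it suffices to
  minimise over a compact box of such functions.\<close>
lemma Jfun_attains_min_on_Espace:
  assumes cont: "\<forall>k\<in>{1..int N}. continuous_on UNIV (f k)"
    and coercive: "coercive_on_E N (Jfun N p q f)"
  obtains y0 where "y0 \<in> Espace N" and "\<And>y. y \<in> Espace N \<Longrightarrow> Jfun N p q f y0 \<le> Jfun N p q f y"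
proof -
  let ?J = "Jfun N p q f"
  obtain R where R: "\<And>y. y \<in> Espace N \<Longrightarrow> R < Enorm N y \<Longrightarrow> ?J (\<lambda>_. 0) < ?J y"
    using coercive unfolding coercive_on_E_def by blast
  define Box where "Box = Pi\<^sub>E UNIV (\<lambda>k. if k \<in> {1..int N} then {-\<bar>R\<bar>..\<bar>R\<bar>} else {0})"
  have Box_Espace: "Box \<subseteq> Espace N"
  proof
    fix y assume "y \<in> Box"
    then have "y k = 0" if "k \<notin> {1..int N}" for k
      using that unfolding Box_def PiE_iff by (metis UNIV_I singletonD)
    then show "y \<in> Espace N" by (simp add: Espace_def)
  qed
  have zero_Box: "(\<lambda>_. 0) \<in> Box" by (simp add: Box_def PiE_iff)
  have "compact Box" unfolding Box_def by (rule compact_PiE_UNIV) auto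
  moreover have "continuous_on Box ?J"
    by (rule continuous_on_subset[OF continuous_on_Jfun[OF cont]]) simp
  ultimately obtain y0 where y0: "y0 \<in> Box" and y0_min: "\<And>y. y \<in> Box \<Longrightarrow> ?J y0 \<le> ?J y"
    using continuous_attains_inf[of Box ?J] zero_Box by blast
  have "?J y0 \<le> ?J y" if y: "y \<in> Espace N" for y
  proof (cases "R < Enorm N y")
    case True
    then show ?thesis using R[OF y] y0_min[OF zero_Box] by simp
  next
    case False
    define y' where "y' k = (if k \<in> {1..int N} then y k else 0)" for k
    have "y k \<in> {-\<bar>R\<bar>..\<bar>R\<bar>}" if "k \<in> {1..int N}" for k
    proof -
      have "(y k)^2 \<le> (Enorm N y)^2"
        unfolding Enorm_power2 by (rule member_le_sum) (use that in auto)
      then have "\<bar>y k\<bar> \<le> Enorm N y" using Enorm_nonneg power2_le_iff_abs_le by blast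
      with False have "\<bar>y k\<bar> \<le> \<bar>R\<bar>" by simp
      then show ?thesis by (simp add: abs_le_iff)
    qed
    then have "y' \<in> Box" by (simp add: Box_def y'_def PiE_iff)
    moreover have "?J y' = ?J y"
      by (rule Jfun_cong) (use Espace_eq_0_outside[OF y] in \<open>auto simp: y'_def\<close>)
    ultimately show ?thesis using y0_min by metis
  qed
  with y0 Box_Espace that show ?thesis by blast
qed

lemma has_real_derivative_Jfun_line:
  assumes cont: "\<forall>k\<in>{1..int N}. continuous_on UNIV (f k)"
  shows "((\<lambda>t. Jfun N p q f (\<lambda>k. y k + t * e k)) has_real_derivative
      (\<Sum>k=1..int N + 2. p k * fdiff2 y (k - 2) * fdiff2 e (k - 2))
    - (\<Sum>k=1..int N + 1. q k * fdiff y (k - 1) * fdiff e (k - 1))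
    + (\<Sum>k=1..int N. f k (y k) * e k)) (at 0)"
proof -
  have "fdiff2 (\<lambda>k. y k + t * e k) j = fdiff2 y j + t * fdiff2 e j"
    and "fdiff (\<lambda>k. y k + t * e k) j = fdiff y j + t * fdiff e j" for t j
    by (simp_all add: fdiff2_eq fdiff_def algebra_simps)
  then have line: "(\<lambda>t. Jfun N p q f (\<lambda>k. y k + t * e k)) = (\<lambda>t.
        (\<Sum>k=1..int N + 2. p k / 2 * (fdiff2 y (k - 2) + t * fdiff2 e (k - 2))^2)
      - (\<Sum>k=1..int N + 1. q k / 2 * (fdiff y (k - 1) + t * fdiff e (k - 1))^2)
      + (\<Sum>k=1..int N. Fprim f k (y k + t * e k)))"
    by (simp add: Jfun_def)
  have dF: "((\<lambda>t. Fprim f k (y k + t * e k)) has_real_derivative f k (y k) * e k) (at 0)"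
    if "k \<in> {1..int N}" for k
  proof -
    have "(Fprim f k has_real_derivative f k (y k)) (at ((\<lambda>t. y k + t * e k) 0))"
      using has_real_derivative_Fprim[of f k] cont that by simp
    moreover have "((\<lambda>t. y k + t * e k) has_real_derivative e k) (at 0)"
      by (auto intro!: derivative_eq_intros)
    ultimately show ?thesis by (rule DERIV_chain2)
  qed
  have "((\<lambda>t. Jfun N p q f (\<lambda>k. y k + t * e k)) has_real_derivative
      (\<Sum>k=1..int N + 2. p k / 2 * (2 * fdiff2 y (k - 2) * fdiff2 e (k - 2)))
    - (\<Sum>k=1..int N + 1. q k / 2 * (2 * fdiff y (k - 1) * fdiff e (k - 1)))
    + (\<Sum>k=1..int N. f k (y k) * e k)) (at 0)"
    unfolding line
    by (intro DERIV_add DERIV_diff DERIV_sum DERIV_cmult dF) (auto intro!: derivative_eq_intros)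
  then show ?thesis by (simp add: mult.assoc)
qed

text \<open>Summation by parts against the unit function at \<open>i\<close>.\<close>
lemma first_variation_along_unitfun:
  assumes i: "i \<in> {1..int N}"
    and e: "e = (\<lambda>k. if k = i then 1 else 0)"
  shows "(\<Sum>k=1..int N + 2. p k * fdiff2 y (k - 2) * fdiff2 e (k - 2))
    - (\<Sum>k=1..int N + 1. q k * fdiff y (k - 1) * fdiff e (k - 1))
    + (\<Sum>k=1..int N. f k (y k) * e k)
    = fdiff2 (\<lambda>j. p j * fdiff2 y (j - 2)) i + fdiff (\<lambda>j. q j * fdiff y (j - 1)) i + f i (y i)"
proof -
  define P where "P k = p k * fdiff2 y (k - 2)" for k
  define Q where "Q k = q k * fdiff y (k - 1)" for k
  have "(\<Sum>k=1..int N + 2. p k * fdiff2 y (k - 2) * fdiff2 e (k - 2))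
      = (\<Sum>k=1..int N + 2. (if k = i then P k else 0) - 2 * (if k = i + 1 then P k else 0)
          + (if k = i + 2 then P k else 0))"
    by (rule sum.cong) (auto simp: fdiff2_eq e P_def algebra_simps)
  also have "\<dots> = fdiff2 P i"
    using i by (simp add: sum.distrib sum_subtractf sum_distrib_left[symmetric] fdiff2_eq)
  finally have sum_P: "(\<Sum>k=1..int N + 2. p k * fdiff2 y (k - 2) * fdiff2 e (k - 2)) = fdiff2 P i" .
  have "(\<Sum>k=1..int N + 1. q k * fdiff y (k - 1) * fdiff e (k - 1))
      = (\<Sum>k=1..int N + 1. (if k = i then Q k else 0) - (if k = i + 1 then Q k else 0))"
    by (rule sum.cong) (auto simp: fdiff_def e Q_def)
  also have "\<dots> = - fdiff Q i"
    using i by (simp add: sum_subtractf fdiff_def)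
  finally have sum_Q: "(\<Sum>k=1..int N + 1. q k * fdiff y (k - 1) * fdiff e (k - 1)) = - fdiff Q i" .
  have "(\<Sum>k=1..int N. f k (y k) * e k) = (\<Sum>k=1..int N. if k = i then f k (y k) else 0)"
    by (rule sum.cong) (auto simp: e)
  with i have sum_f: "(\<Sum>k=1..int N. f k (y k) * e k) = f i (y i)" by simp
  show ?thesis
    unfolding sum_P sum_Q sum_f P_def[abs_def] Q_def[abs_def] by simp
qed

lemma Jfun_minimizer_is_solution:
  assumes cont: "\<forall>k\<in>{1..int N}. continuous_on UNIV (f k)"
    and y0: "y0 \<in> Espace N"
    and min: "\<And>y. y \<in> Espace N \<Longrightarrow> Jfun N p q f y0 \<le> Jfun N p q f y"
  shows "is_solution N p q f y0"
  unfolding is_solution_def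
proof (intro conjI ballI y0)
  fix i assume i: "i \<in> {1..int N}"
  define e where "e = (\<lambda>k. if k = i then 1 else 0 :: real)"
  have "(\<lambda>k. y0 k + t * e k) \<in> Espace N" for t
    using y0 i by (auto simp: Espace_def e_def)
  then have "Jfun N p q f (\<lambda>k. y0 k + 0 * e k) \<le> Jfun N p q f (\<lambda>k. y0 k + t * e k)" for t
    using min by simp
  from has_real_derivative_zero_at_min[OF has_real_derivative_Jfun_line[OF cont] this]
  show "fdiff2 (\<lambda>j. p j * fdiff2 y0 (j - 2)) i + fdiff (\<lambda>j. q j * fdiff y0 (j - 1)) i
      + f i (y0 i) = 0"
    unfolding first_variation_along_unitfun[OF i e_def] .
qed

theorem lemma6:
  fixes N :: nat and f :: "int \<Rightarrow> real \<Rightarrow> real" and p q :: "int \<Rightarrow> real"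
  assumes "N \<ge> 1"
    and "\<forall>k \<in> {1..int N}. continuous_on UNIV (f k)"
    and "\<forall>k \<in> {1..int N}. \<exists>L :: ereal.
           ((\<lambda>s. ereal (f k s / s)) \<longlongrightarrow> L) at_top \<and> L > ereal (alpha1 N p q)"
    and "\<exists>S > 0. \<forall>s \<ge> S. \<forall>k \<in> {1..int N}. f k (-s) \<le> - f k s"
  shows "coercive_on_E N (Jfun N p q f) \<and> (\<exists>y. is_solution N p q f y)"
proof -
  note cont = assms(2)
  obtain c where c: "alpha1 N p q < c"
    and slope: "\<forall>\<^sub>F s in at_top. \<forall>k\<in>{1..int N}. c * s \<le> f k s"
    using eventually_uniform_slope_gt[OF finite_atLeastAtMost_int assms(3)] by blast
  obtain S where odd: "\<And>s k. S \<le> s \<Longrightarrow> k \<in> {1..int N} \<Longrightarrow> f k (-s) \<le> - f k s"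
    using assms(4) by blast
  have "\<forall>\<^sub>F s in at_top. \<forall>k\<in>{1..int N}. c * s \<le> f k s \<and> f k (-s) \<le> - f k s"
    using slope eventually_ge_at_top[of S] by eventually_elim (use odd in blast)
  then obtain D where F: "\<And>k t. k \<in> {1..int N} \<Longrightarrow> c * t^2 / 2 - D \<le> Fprim f k t"
    using Fprim_ge_quadratic[OF finite_atLeastAtMost_int cont] by blast
  have coercive: "coercive_on_E N (Jfun N p q f)"
    using c Jfun_ge_quadratic[OF _ assms(1) F]
    by (intro coercive_on_E_if_ge_quadratic[of "(c - alpha1 N p q) / 2" _ "real N * D"]) auto
  obtain y0 where "y0 \<in> Espace N" "\<And>y. y \<in> Espace N \<Longrightarrow> Jfun N p q f y0 \<le> Jfun N p q f y"
    using Jfun_attains_min_on_Espace[OF cont coercive] by blast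
  with coercive show ?thesis
    using Jfun_minimizer_is_solution[OF cont] by blast
qed

end
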